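(* Let $0<a<1$ and let $\tau_1,\tau_2:[0,a]\to[0,1]$ be continuously differentiable, strictly increasing maps with $\tau_i(0)=0$, $\tau_i(a)=1$, $\tau_1(x)\le x/a$ and $\tau_2(x)\ge x/a$, such that $\tau_{21}=\tau_2^{-1}\circ\tau_1:[0,a]\to[0,a]$ is continuously differentiable and satisfies $\tau_{21}(x)<x$ for $x\in(0,a)$. Let $0<\widehat a<a$ and $\sigma<1$ be such that $\tau_{21}'(x)\le\sigma$ for $x\in[0,\widehat a]$. Then the unique bounded solution on $[0,\widehat a]$ of the functional equation $$p(x)=p(\tau_{21}(x))\,\tau_{21}'(x)-\left[\tau_{21}'(x)-a\,\tau_1'(x)\right]$$ is given by the convergent series $$p(x)=\sum_{n=0}^\infty B(\tau_{21}^n(x))\,(\tau_{21}^n)'(x),\qquad x\in[0,\widehat a],$$ where $B(x)=a\,\tau_1'(x)-\tau_{21}'(x)$ and $\tau_{21}^n$ denotes the $n$-th iterate. *)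

theory Defs
  imports "HOL-Analysis.Analysis"
begin

definition dwithin :: "real set \<Rightarrow> (real \<Rightarrow> real) \<Rightarrow> real \<Rightarrow> real" where
  "dwithin S f x = vector_derivative f (at x within S)"

definition C1_on :: "real set \<Rightarrow> (real \<Rightarrow> real) \<Rightarrow> bool" where
  "C1_on S f \<longleftrightarrow> (\<forall>x\<in>S. f differentiable (at x within S)) \<and> continuous_on S (dwithin S f)"

end

theory Submission
  imports Defs
begin

text \<open>Iterating the functional equation \<open>p x = B x + p (T x) * D x\<close> along the orbit of \<open>x\<close>
  under \<open>T\<close> produces the series \<open>\<Sum>n. B (T\<^sup>n x) * \<Prod>k<n. D (T\<^sup>k x)\<close>; when \<open>|D| \<le> \<sigma> < 1\<close>
  on a \<open>T\<close>-invariant set it is dominated by a geometric series, hence bounded, and the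
  difference of two bounded solutions is at most a constant times \<open>\<sigma>\<^sup>n\<close> for every \<open>n\<close>.
  For \<open>T = \<tau>\<^sub>2\<^sub>1\<close>, the chain rule identifies \<open>\<Prod>k<n. D (T\<^sup>k x)\<close> with \<open>(T\<^sup>n)' x\<close>.\<close>

locale contracting_functional_equation =
  fixes J :: "'a set" and T :: "'a \<Rightarrow> 'a" and B D :: "'a \<Rightarrow> real" and \<sigma> :: real
  assumes T_maps: "\<And>x. x \<in> J \<Longrightarrow> T x \<in> J"
    and B_bounded: "bounded (B ` J)"
    and D_bound: "\<And>x. x \<in> J \<Longrightarrow> \<bar>D x\<bar> \<le> \<sigma>"
    and contraction: "\<sigma> < 1"
begin

definition cocycle :: "nat \<Rightarrow> 'a \<Rightarrow> real" where
  "cocycle n x = (\<Prod>k<n. D ((T ^^ k) x))"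

definition series_solution :: "'a \<Rightarrow> real" where
  "series_solution x = (\<Sum>n. B ((T ^^ n) x) * cocycle n x)"

lemma funpow_maps: "x \<in> J \<Longrightarrow> (T ^^ n) x \<in> J"
  by (induction n) (auto intro: T_maps)

lemma cocycle_0 [simp]: "cocycle 0 x = 1"
  by (simp add: cocycle_def)

lemma cocycle_Suc: "cocycle (Suc n) x = D x * cocycle n (T x)"
  unfolding cocycle_def prod.lessThan_Suc_shift by (simp add: funpow_swap1)

lemma cocycle_Suc': "cocycle (Suc n) x = cocycle n x * D ((T ^^ n) x)"
  by (simp add: cocycle_def)

lemma sigma_nonneg: "x \<in> J \<Longrightarrow> 0 \<le> \<sigma>"
  using D_bound[of x] by linarith

lemma abs_cocycle_le: "x \<in> J \<Longrightarrow> \<bar>cocycle n x\<bar> \<le> \<sigma> ^ n"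
  unfolding cocycle_def abs_prod
  by (rule order_trans[OF prod_mono[of _ _ "\<lambda>_. \<sigma>"]]) (auto intro: D_bound funpow_maps)

lemma abs_funpow_cocycle_le:
  assumes f: "\<And>y. y \<in> J \<Longrightarrow> \<bar>f y\<bar> \<le> K" and x: "x \<in> J"
  shows "\<bar>f ((T ^^ n) x) * cocycle n x\<bar> \<le> K * \<sigma> ^ n"
proof -
  have "0 \<le> K"
    using f[OF x] by linarith
  then show ?thesis
    unfolding abs_mult
    by (intro mult_mono f funpow_maps abs_cocycle_le x) simp_all
qed

lemma series_solution_summable_bounded:
  obtains K where "\<And>x. x \<in> J \<Longrightarrow> summable (\<lambda>n. B ((T ^^ n) x) * cocycle n x)"
    and "\<And>x. x \<in> J \<Longrightarrow> \<bar>series_solution x\<bar> \<le> K"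
proof -
  obtain M where M: "\<And>y. y \<in> J \<Longrightarrow> \<bar>B y\<bar> \<le> M"
    using B_bounded unfolding bounded_real by blast
  have term_bound: "\<bar>B ((T ^^ n) x) * cocycle n x\<bar> \<le> M * \<sigma> ^ n" if "x \<in> J" for x n
    using abs_funpow_cocycle_le M that by blast
  have geometric: "summable (\<lambda>n. M * \<sigma> ^ n)" if "x \<in> J" for x
    using sigma_nonneg[OF that] contraction by (intro summable_mult summable_geometric) simp
  have abs_summable: "summable (\<lambda>n. \<bar>B ((T ^^ n) x) * cocycle n x\<bar>)" if "x \<in> J" for x
    using term_bound[OF that] by (intro summable_comparison_test'[OF geometric[OF that]]) simp
  have "\<bar>series_solution x\<bar> \<le> (\<Sum>n. M * \<sigma> ^ n)" if "x \<in> J" for x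
    unfolding series_solution_def
    using summable_rabs[OF abs_summable[OF that]]
      suminf_le[OF term_bound[OF that] abs_summable[OF that] geometric[OF that]]
    by linarith
  with abs_summable show thesis
    by (intro that[of "\<Sum>n. M * \<sigma> ^ n"]) (simp_all add: summable_rabs_cancel)
qed

lemma summable_series_solution: "x \<in> J \<Longrightarrow> summable (\<lambda>n. B ((T ^^ n) x) * cocycle n x)"
  using series_solution_summable_bounded by metis

lemma bounded_series_solution: "bounded (series_solution ` J)"
proof -
  obtain K where "\<And>x. x \<in> J \<Longrightarrow> \<bar>series_solution x\<bar> \<le> K"
    using series_solution_summable_bounded by metis
  then show ?thesis
    unfolding bounded_real by blast
qed

lemma series_solution_eq: "x \<in> J \<Longrightarrow> series_solution x = B x + series_solution (T x) * D x"
proof -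
  assume x: "x \<in> J"
  have "(\<Sum>n. B ((T ^^ Suc n) x) * cocycle (Suc n) x) = series_solution (T x) * D x"
    unfolding series_solution_def cocycle_Suc funpow_Suc_right o_def
    using suminf_mult2[OF summable_series_solution[OF T_maps[OF x]], of "D x"]
    by (simp add: ac_simps)
  then show ?thesis
    using suminf_split_head[OF summable_series_solution[OF x]]
    unfolding series_solution_def by simp
qed

lemma bounded_solution_unique:
  assumes bounded: "bounded (q ` J)"
    and eq: "\<And>x. x \<in> J \<Longrightarrow> q x = B x + q (T x) * D x"
    and x: "x \<in> J"
  shows "q x = series_solution x"
proof -
  define d where "d y = q y - series_solution y" for y
  have d_iterate: "d y = d ((T ^^ n) y) * cocycle n y" if "y \<in> J" for n y
  proof (induction n)
    case (Suc n)
    have "d ((T ^^ n) y) = d ((T ^^ Suc n) y) * D ((T ^^ n) y)"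
      using eq series_solution_eq funpow_maps[OF that]
      by (simp add: d_def algebra_simps)
    with Suc show ?case by (simp add: cocycle_Suc')
  qed simp
  obtain K where K: "\<And>y. y \<in> J \<Longrightarrow> \<bar>d y\<bar> \<le> K"
    using bounded_minus_comp[OF bounded bounded_series_solution]
    unfolding bounded_real d_def by blast
  have "(\<lambda>n. K * \<sigma> ^ n) \<longlonglongrightarrow> 0"
    using sigma_nonneg[OF x] contraction by (intro tendsto_mult_right_zero LIMSEQ_power_zero) simp
  moreover have "\<bar>d x\<bar> \<le> K * \<sigma> ^ n" for n
    using abs_funpow_cocycle_le[of d K x n] K x by (simp only: d_iterate[OF x, symmetric])
  ultimately have "\<bar>d x\<bar> \<le> 0"
    by (intro LIMSEQ_le_const) auto
  then show ?thesis by (simp add: d_def)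
qed

end

lemma mono_on_imp_deriv_within_nonneg:
  fixes f :: "real \<Rightarrow> real"
  assumes mono: "mono_on S f" and x: "x \<in> S" and nontrivial: "at x within S \<noteq> bot"
    and deriv: "(f has_real_derivative D) (at x within S)"
  shows "0 \<le> D"
proof (rule tendsto_lowerbound[OF _ _ nontrivial])
  show "((\<lambda>y. (f y - f x) / (y - x)) \<longlongrightarrow> D) (at x within S)"
    using deriv by (simp add: has_field_derivative_iff)
  show "\<forall>\<^sub>F y in at x within S. 0 \<le> (f y - f x) / (y - x)"
    unfolding eventually_at_filter
  proof (intro always_eventually allI impI)
    fix y assume "y \<noteq> x" "y \<in> S"
    then show "0 \<le> (f y - f x) / (y - x)"
      using mono x by (cases y rule: linorder_cases[of _ x])
        (auto simp: divide_nonpos_neg divide_nonneg_pos mono_onD)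
  qed
qed

lemma mono_on_imp_dwithin_nonneg:
  assumes "lo < hi" and mono: "mono_on {lo..hi} f"
    and diff: "f differentiable (at x within {lo..hi})" and x: "x \<in> {lo..hi}"
  shows "0 \<le> dwithin {lo..hi} f x"
  using mono_on_imp_deriv_within_nonneg[OF mono x] diff assms(1) x
  by (simp add: dwithin_def trivial_limit_within vector_derivative_works
      has_real_derivative_iff_has_vector_derivative)

lemma has_vector_derivative_funpow:
  fixes T :: "real \<Rightarrow> real"
  assumes maps: "\<And>y. y \<in> S \<Longrightarrow> T y \<in> S"
    and deriv: "\<And>y. y \<in> S \<Longrightarrow> (T has_vector_derivative T' y) (at y within S)"
    and x: "x \<in> S"
  shows "((T ^^ n) has_vector_derivative (\<Prod>k<n. T' ((T ^^ k) x))) (at x within S)"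
proof (induction n)
  case (Suc n)
  have iterate_maps: "(T ^^ n) y \<in> S" if "y \<in> S" for y
    using that by (induction n) (auto intro: maps)
  have "(T has_vector_derivative T' ((T ^^ n) x)) (at ((T ^^ n) x) within (T ^^ n) ` S)"
    using iterate_maps x
    by (blast intro: has_vector_derivative_within_subset[OF deriv])
  from vector_diff_chain_within[OF Suc this] show ?case
    by (simp add: o_def mult.commute)
qed simp

lemma dwithin_funpow:
  assumes "lo < hi" and maps: "\<And>y. y \<in> {lo..hi} \<Longrightarrow> T y \<in> {lo..hi}"
    and diff: "\<And>y. y \<in> {lo..hi} \<Longrightarrow> T differentiable (at y within {lo..hi})"
    and x: "x \<in> {lo..hi}"
  shows "dwithin {lo..hi} (T ^^ n) x = (\<Prod>k<n. dwithin {lo..hi} T ((T ^^ k) x))"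
  unfolding dwithin_def
  using assms has_vector_derivative_funpow[OF maps vector_derivative_works[THEN iffD1, OF diff] x]
  by (intro vector_derivative_within_closed_interval) auto

lemma C1_on_imp_continuous_on: "C1_on S f \<Longrightarrow> continuous_on S f"
  unfolding C1_on_def
  by (meson continuous_on_eq_continuous_within differentiable_imp_continuous_within)

lemma Icc_subset_image_continuous:
  fixes g :: "real \<Rightarrow> real"
  assumes "lo \<le> hi" "continuous_on {lo..hi} g"
  shows "{g lo..g hi} \<subseteq> g ` {lo..hi}"
  using IVT'[of g lo _ hi] assms by fastforce

lemma mono_on_inv_into_comp:
  fixes f g :: "'a::linorder \<Rightarrow> 'b::linorder"
  assumes f: "mono_on S f" and g: "strict_mono_on S g" and img: "f ` S \<subseteq> g ` S"
  shows "mono_on S (\<lambda>x. inv_into S g (f x))"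
proof (rule mono_onI)
  fix x y assume xy: "x \<in> S" "y \<in> S" "x \<le> y"
  then have "g (inv_into S g (f x)) \<le> g (inv_into S g (f y))"
    using img f by (simp add: f_inv_into_f image_subset_iff mono_onD)
  then show "inv_into S g (f x) \<le> inv_into S g (f y)"
    using xy img by (simp add: strict_mono_on_less_eq[OF g] inv_into_into image_subset_iff)
qed

lemma inv_into_comp_Icc:
  fixes f g :: "real \<Rightarrow> real" and lo hi :: real
  defines "h \<equiv> \<lambda>x. inv_into {lo..hi} g (f x)"
  assumes "lo \<le> hi" and cont: "continuous_on {lo..hi} g"
    and f: "strict_mono_on {lo..hi} f" and g: "strict_mono_on {lo..hi} g"
    and range: "f ` {lo..hi} \<subseteq> {g lo..g hi}"
  shows "h ` {lo..hi} \<subseteq> {lo..hi}" and "mono_on {lo..hi} h"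
proof -
  have img: "f ` {lo..hi} \<subseteq> g ` {lo..hi}"
    using range Icc_subset_image_continuous[OF \<open>lo \<le> hi\<close> cont] by blast
  then show "h ` {lo..hi} \<subseteq> {lo..hi}"
    unfolding h_def by (blast intro: inv_into_into)
  show "mono_on {lo..hi} h"
    unfolding h_def using strict_mono_on_imp_mono_on[OF f] g img by (rule mono_on_inv_into_comp)
qed

lemma Icc_invariant_below_diagonal:
  fixes T :: "real \<Rightarrow> real"
  assumes "T 0 = 0" and below: "\<forall>x\<in>{0<..<a}. T x < x" and nonneg: "\<And>x. x \<in> {0..b} \<Longrightarrow> 0 \<le> T x"
    and "b < a"
  shows "T ` {0..b} \<subseteq> {0..b}"
proof (intro image_subsetI)
  fix x assume x: "x \<in> {0..b}"
  have "T x \<le> x"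
  proof (cases "x = 0")
    case False
    with x \<open>b < a\<close> below show ?thesis by (simp add: less_imp_le)
  qed (simp add: \<open>T 0 = 0\<close>)
  with x nonneg[OF x] show "T x \<in> {0..b}" by simp
qed

theorem proposition3:
  fixes a ah \<sigma> :: real and \<tau>1 \<tau>2 :: "real \<Rightarrow> real"
  defines "\<tau>21 \<equiv> (\<lambda>x. inv_into {0..a} \<tau>2 (\<tau>1 x))"
  defines "B \<equiv> (\<lambda>x. a * dwithin {0..a} \<tau>1 x - dwithin {0..a} \<tau>21 x)"
  assumes a: "0 < a" "a < 1"
    and maps: "\<tau>1 ` {0..a} \<subseteq> {0..1}" "\<tau>2 ` {0..a} \<subseteq> {0..1}"
    and C1: "C1_on {0..a} \<tau>1" "C1_on {0..a} \<tau>2"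
    and mono: "strict_mono_on {0..a} \<tau>1" "strict_mono_on {0..a} \<tau>2"
    and ends: "\<tau>1 0 = 0" "\<tau>2 0 = 0" "\<tau>1 a = 1" "\<tau>2 a = 1"
    and below: "\<forall>x\<in>{0..a}. \<tau>1 x \<le> x / a"
    and above: "\<forall>x\<in>{0..a}. \<tau>2 x \<ge> x / a"
    and C1_21: "C1_on {0..a} \<tau>21"
    and less: "\<forall>x\<in>{0<..<a}. \<tau>21 x < x"
    and ah: "0 < ah" "ah < a"
    and sig: "\<sigma> < 1" "\<forall>x\<in>{0..ah}. dwithin {0..a} \<tau>21 x \<le> \<sigma>"
  shows "let p = (\<lambda>x. \<Sum>n. B ((\<tau>21 ^^ n) x) * dwithin {0..a} (\<tau>21 ^^ n) x) in
     (\<forall>x\<in>{0..ah}. summable (\<lambda>n. B ((\<tau>21 ^^ n) x) * dwithin {0..a} (\<tau>21 ^^ n) x))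
   \<and> bounded (p ` {0..ah})
   \<and> (\<forall>x\<in>{0..ah}. p x = p (\<tau>21 x) * dwithin {0..a} \<tau>21 x
                            - (dwithin {0..a} \<tau>21 x - a * dwithin {0..a} \<tau>1 x))
   \<and> (\<forall>q. bounded (q ` {0..ah}) \<and>
          (\<forall>x\<in>{0..ah}. q x = q (\<tau>21 x) * dwithin {0..a} \<tau>21 x
                            - (dwithin {0..a} \<tau>21 x - a * dwithin {0..a} \<tau>1 x))
          \<longrightarrow> (\<forall>x\<in>{0..ah}. q x = p x))"
proof -
  let ?D = "dwithin {0..a} \<tau>21"
  have maps_21: "\<tau>21 ` {0..a} \<subseteq> {0..a}" and mono_21: "mono_on {0..a} \<tau>21"
    using inv_into_comp_Icc[OF _ C1_on_imp_continuous_on[OF C1(2)] mono] maps(1) ends a(1)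
    unfolding \<tau>21_def by auto
  have "\<tau>21 0 = 0"
    unfolding \<tau>21_def using ends a inv_into_f_f[OF strict_mono_on_imp_inj_on[OF mono(2)], of 0]
    by simp
  with less maps_21 ah have maps_ah: "\<tau>21 ` {0..ah} \<subseteq> {0..ah}"
    by (intro Icc_invariant_below_diagonal) (auto simp: image_subset_iff)
  have diff_21: "\<tau>21 differentiable (at x within {0..a})" if "x \<in> {0..a}" for x
    using C1_21 that unfolding C1_on_def by blast
  have D_bound: "\<bar>?D x\<bar> \<le> \<sigma>" if "x \<in> {0..ah}" for x
    using mono_on_imp_dwithin_nonneg[OF a(1) mono_21 diff_21, of x] sig(2) that ah by auto
  have "bounded (B ` {0..a})"
    using C1(1) C1_21 unfolding B_def C1_on_def
    by (intro compact_imp_bounded compact_continuous_image continuous_intros) auto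
  then have "bounded (B ` {0..ah})"
    by (rule bounded_subset) (use ah in auto)
  with maps_ah D_bound sig(1) interpret contracting_functional_equation "{0..ah}" \<tau>21 B ?D \<sigma>
    by unfold_locales (auto simp: image_subset_iff)
  have dwithin_eq: "dwithin {0..a} (\<tau>21 ^^ n) x = cocycle n x" if "x \<in> {0..ah}" for n x
    using dwithin_funpow[OF a(1) _ diff_21] maps_21 that ah by (simp add: cocycle_def image_subset_iff)
  have solution_eq: "(\<Sum>n. B ((\<tau>21 ^^ n) x) * dwithin {0..a} (\<tau>21 ^^ n) x) = series_solution x"
    and summable: "summable (\<lambda>n. B ((\<tau>21 ^^ n) x) * dwithin {0..a} (\<tau>21 ^^ n) x)"
    if x: "x \<in> {0..ah}" for x
    using summable_series_solution[OF x] by (simp_all add: series_solution_def dwithin_eq[OF x])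
  have solution_image: "(\<lambda>x. \<Sum>n. B ((\<tau>21 ^^ n) x) * dwithin {0..a} (\<tau>21 ^^ n) x) ` {0..ah}
      = series_solution ` {0..ah}"
    by (rule image_cong[OF refl solution_eq])
  have equation_iff: "q x = q (\<tau>21 x) * ?D x - (?D x - a * dwithin {0..a} \<tau>1 x)
      \<longleftrightarrow> q x = B x + q (\<tau>21 x) * ?D x" for q :: "real \<Rightarrow> real" and x
    by (auto simp: B_def algebra_simps)
  show ?thesis
    unfolding Let_def equation_iff solution_image
  proof (intro conjI ballI allI impI summable bounded_series_solution)
    fix x assume x: "x \<in> {0..ah}"
    then have "\<tau>21 x \<in> {0..ah}"
      using maps_ah by blast
    with x show "(\<Sum>n. B ((\<tau>21 ^^ n) x) * dwithin {0..a} (\<tau>21 ^^ n) x)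
        = B x + (\<Sum>n. B ((\<tau>21 ^^ n) (\<tau>21 x)) * dwithin {0..a} (\<tau>21 ^^ n) (\<tau>21 x)) * ?D x"
      by (simp only: solution_eq series_solution_eq)
  next
    fix q x
    assume "bounded (q ` {0..ah}) \<and> (\<forall>x\<in>{0..ah}. q x = B x + q (\<tau>21 x) * ?D x)"
      and x: "x \<in> {0..ah}"
    then show "q x = (\<Sum>n. B ((\<tau>21 ^^ n) x) * dwithin {0..a} (\<tau>21 ^^ n) x)"
      unfolding solution_eq[OF x] using bounded_solution_unique by blast
  qed
qed

end
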